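(* Let $(A,d,\Delta)$ be a mixed chain complex over a field. If it satisfies the $d\Delta$-condition then it is semi-classical, and if it is semi-classical then it admits non-commutative Hodge-to-de Rham degeneration data.
   Context: A mixed chain complex is a graded vector space $A$ with two anticommuting square-zero operators $d$ of degree $-1$ and $\Delta$ of degree $+1$. The $d\Delta$-condition is $\mathrm{Ker}\,d\cap\mathrm{Ker}\,\Delta\cap(\mathrm{Im}\,d+\mathrm{Im}\,\Delta)=\mathrm{Im}\,d\Delta=\mathrm{Im}\,\Delta d$. The complex is semi-classical if every homology class of $(A,d)$ has a representative in $\mathrm{Ker}\,\Delta$. Non-commutative Hodge-to-de Rham degeneration data is a deformation retract $p:(A,d)\to(H(A),0)$, $i:(H(A),0)\to(A,d)$, $h$ of degree $1$ on $A$, with $pi=\mathrm{id}$, $\mathrm{id}_A-ip=dh+hd$, such that $p(\Delta h)^{m-1}\Delta i=0$ for all $m\ge1$. *)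

theory Defs
  imports Complex_Main
begin

definition graded :: "('k::field \<Rightarrow> 'v::ab_group_add \<Rightarrow> 'v) \<Rightarrow> (int \<Rightarrow> 'v set) \<Rightarrow> bool" where
  "graded scale G \<longleftrightarrow>
     (\<forall>n. module.subspace scale (G n)) \<and>
     (\<forall>v. \<exists>!c :: int \<Rightarrow> 'v. finite {n. c n \<noteq> 0} \<and> (\<forall>n. c n \<in> G n) \<and>
                         v = (\<Sum>n\<in>{n. c n \<noteq> 0}. c n))"

definition hom_map :: "('k::field \<Rightarrow> 'v::ab_group_add \<Rightarrow> 'v) \<Rightarrow> (int \<Rightarrow> 'v set) \<Rightarrow> int \<Rightarrow> ('v \<Rightarrow> 'v) \<Rightarrow> bool" where
  "hom_map scale G k f \<longleftrightarrow> Vector_Spaces.linear scale scale f \<and> (\<forall>n. f ` G n \<subseteq> G (n + k))"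

definition mixed_complex ::
  "('k::field \<Rightarrow> 'v::ab_group_add \<Rightarrow> 'v) \<Rightarrow> (int \<Rightarrow> 'v set) \<Rightarrow> ('v \<Rightarrow> 'v) \<Rightarrow> ('v \<Rightarrow> 'v) \<Rightarrow> bool" where
  "mixed_complex scale G d \<Delta> \<longleftrightarrow>
     vector_space scale \<and> graded scale G \<and>
     hom_map scale G (-1) d \<and> hom_map scale G 1 \<Delta> \<and>
     (\<forall>x. d (d x) = 0) \<and> (\<forall>x. \<Delta> (\<Delta> x) = 0) \<and> (\<forall>x. d (\<Delta> x) + \<Delta> (d x) = 0)"

definition dDelta_condition :: "('v::ab_group_add \<Rightarrow> 'v) \<Rightarrow> ('v \<Rightarrow> 'v) \<Rightarrow> bool" where
  "dDelta_condition d \<Delta> \<longleftrightarrow>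
     {x. d x = 0} \<inter> {x. \<Delta> x = 0} \<inter> {a + b | a b. a \<in> range d \<and> b \<in> range \<Delta>}
        = range (d \<circ> \<Delta>)
     \<and> range (d \<circ> \<Delta>) = range (\<Delta> \<circ> d)"

definition semi_classical :: "('v::ab_group_add \<Rightarrow> 'v) \<Rightarrow> ('v \<Rightarrow> 'v) \<Rightarrow> bool" where
  "semi_classical d \<Delta> \<longleftrightarrow>
     (\<forall>z. d z = 0 \<longrightarrow> (\<exists>w. d w = 0 \<and> \<Delta> w = 0 \<and> z - w \<in> range d))"

text \<open>The homology H(A) of (A,d), realised as the set of cosets z + Im d with
d z = 0, with its induced vector space operations and grading.\<close>

definition hcls :: "('v::ab_group_add \<Rightarrow> 'v) \<Rightarrow> 'v \<Rightarrow> 'v set" where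
  "hcls d x = {x + b | b. b \<in> range d}"

definition homology :: "('v::ab_group_add \<Rightarrow> 'v) \<Rightarrow> 'v set set" where
  "homology d = {hcls d z | z. d z = 0}"

definition homology_deg :: "(int \<Rightarrow> 'v set) \<Rightarrow> ('v::ab_group_add \<Rightarrow> 'v) \<Rightarrow> int \<Rightarrow> 'v set set" where
  "homology_deg G d n = {hcls d z | z. z \<in> G n \<and> d z = 0}"

definition hadd :: "'v::ab_group_add set \<Rightarrow> 'v set \<Rightarrow> 'v set" where
  "hadd X Y = {x + y | x y. x \<in> X \<and> y \<in> Y}"

definition hscale :: "('k \<Rightarrow> 'v::ab_group_add \<Rightarrow> 'v) \<Rightarrow> ('v \<Rightarrow> 'v) \<Rightarrow> 'k \<Rightarrow> 'v set \<Rightarrow> 'v set" where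
  "hscale scale d c X = {scale c x + b | x b. x \<in> X \<and> b \<in> range d}"

text \<open>Non-commutative Hodge-to-de Rham degeneration data: a deformation retract
p : (A,d) \<rightarrow> (H(A),0), i : (H(A),0) \<rightarrow> (A,d), h of degree 1, with p i = id,
id - i p = d h + h d, and p (Delta h)^(m-1) Delta i = 0 for all m \<ge> 1.\<close>

definition nc_HdR_data ::
  "('k::field \<Rightarrow> 'v::ab_group_add \<Rightarrow> 'v) \<Rightarrow> (int \<Rightarrow> 'v set) \<Rightarrow> ('v \<Rightarrow> 'v) \<Rightarrow> ('v \<Rightarrow> 'v)
   \<Rightarrow> ('v \<Rightarrow> 'v set) \<Rightarrow> ('v set \<Rightarrow> 'v) \<Rightarrow> ('v \<Rightarrow> 'v) \<Rightarrow> bool" where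
  "nc_HdR_data scale G d \<Delta> p i h \<longleftrightarrow>
     \<comment> \<open>p : A \<rightarrow> H(A) linear, of degree 0, chain map to (H(A),0)\<close>
     (\<forall>x. p x \<in> homology d) \<and>
     (\<forall>x y. p (x + y) = hadd (p x) (p y)) \<and>
     (\<forall>c x. p (scale c x) = hscale scale d c (p x)) \<and>
     (\<forall>n. p ` G n \<subseteq> homology_deg G d n) \<and>
     (\<forall>x. p (d x) = hcls d 0) \<and>
     \<comment> \<open>i : H(A) \<rightarrow> A linear, of degree 0, chain map from (H(A),0)\<close>
     (\<forall>X\<in>homology d. \<forall>Y\<in>homology d. i (hadd X Y) = i X + i Y) \<and>
     (\<forall>c. \<forall>X\<in>homology d. i (hscale scale d c X) = scale c (i X)) \<and>
     (\<forall>n. i ` homology_deg G d n \<subseteq> G n) \<and>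
     (\<forall>X\<in>homology d. d (i X) = 0) \<and>
     \<comment> \<open>h homogeneous linear of degree 1\<close>
     hom_map scale G 1 h \<and>
     \<comment> \<open>deformation retract identities\<close>
     (\<forall>X\<in>homology d. p (i X) = X) \<and>
     (\<forall>x. x - i (p x) = d (h x) + h (d x)) \<and>
     \<comment> \<open>degeneration condition\<close>
     (\<forall>m::nat. m \<ge> 1 \<longrightarrow> (\<forall>X\<in>homology d. p (((\<Delta> \<circ> h) ^^ (m - 1)) (\<Delta> (i X))) = hcls d 0))"

end

theory Submission
  imports Defs
begin

text \<open>
  The first implication is a direct diagram chase: for a d-cycle z the
  element Delta z lies in Ker d, Ker Delta and Im Delta, so the dDelta-condition writes it as
  Delta (d y), and z - d y is a Delta-closed representative of the class of z.

  For the second implication we build a "harmonic projection": a linear map P of degree 0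
  with d P = 0, Delta P = 0, P d = 0 and a homotopy h of degree 1 with id - P = d h + h d.
  Without the grading this is linear algebra: semi-classicality says that the cycles lie
  in (Ker d \<inter> Ker Delta) + Im d, and P projects onto a complement of Im d chosen inside
  Ker d \<inter> Ker Delta.  The grading is then restored by replacing every linear map by its
  homogeneous part of the required degree, which preserves all the identities.
  Finally p = [P -], i = P (representative) and the homotopy h + h P form a deformation
  retract onto homology; since i lands in Ker Delta, every term
  p (Delta h)^(m-1) Delta i vanishes, which is the degeneration condition.
\<close>

context vector_space
begin

text \<open>Linear endomorphisms of the space form a vector space pair with itself; this gives
  access to the library facts about linear maps.\<close>

sublocale endo: vector_space_pair scale scale ..

lemma linear_compose_fun:
  "Vector_Spaces.linear scale scale f \<Longrightarrow> Vector_Spaces.linear scale scale g \<Longrightarrow>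
   Vector_Spaces.linear scale scale (\<lambda>x. f (g x))"
  using Vector_Spaces.linear_compose[of scale scale g scale f] by (simp add: comp_def)

text \<open>For a cycle z, Delta z is d-closed (by anticommutation),
  Delta-closed and in Im d + Im Delta, hence equal to Delta (d y); then z - d y represents
  the class of z and lies in Ker Delta.\<close>

lemma dDelta_condition_imp_semi_classical:
  assumes ld: "Vector_Spaces.linear scale scale d" and lD: "Vector_Spaces.linear scale scale \<Delta>"
    and d_sq: "\<And>x. d (d x) = 0" and Delta_sq: "\<And>x. \<Delta> (\<Delta> x) = 0"
    and anti: "\<And>x. d (\<Delta> x) + \<Delta> (d x) = 0"
    and cond: "dDelta_condition d \<Delta>"
  shows "semi_classical d \<Delta>"
  unfolding semi_classical_def
proof (intro allI impI)
  fix z assume dz: "d z = 0"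
  have "d (\<Delta> z) = 0" using anti[of z] by (simp add: dz endo.linear_0[OF lD])
  moreover have "\<Delta> (\<Delta> z) = 0" by (rule Delta_sq)
  moreover have "\<Delta> z \<in> {a + b | a b. a \<in> range d \<and> b \<in> range \<Delta>}"
  proof -
    have "\<Delta> z = d 0 + \<Delta> z" by (simp add: endo.linear_0[OF ld])
    then show ?thesis by blast
  qed
  ultimately have "\<Delta> z \<in> range (\<Delta> \<circ> d)"
    using cond unfolding dDelta_condition_def by blast
  then obtain y where y: "\<Delta> z = \<Delta> (d y)" by auto
  show "\<exists>w. d w = 0 \<and> \<Delta> w = 0 \<and> z - w \<in> range d"
  proof (intro exI conjI)
    show "d (z - d y) = 0" by (simp add: endo.linear_diff[OF ld] dz d_sq)
    show "\<Delta> (z - d y) = 0" by (simp add: endo.linear_diff[OF lD] y)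
    show "z - (z - d y) \<in> range d" by simp
  qed
qed

text \<open>Given subspaces K and R, there are linear projections q onto K and r onto R such that
  q vanishes on R and q + r is the identity on K + R: extend a basis of R by vectors of K
  to a basis of K + R and split along it.\<close>

lemma complement_projections:
  assumes K: "subspace K" and R: "subspace R"
  obtains q r where "Vector_Spaces.linear scale scale q" "Vector_Spaces.linear scale scale r"
    "\<And>x. q x \<in> K" "\<And>x. r x \<in> R" "\<And>b. b \<in> R \<Longrightarrow> q b = 0"
    "\<And>a b. a \<in> K \<Longrightarrow> b \<in> R \<Longrightarrow> q (a + b) + r (a + b) = a + b"
proof -
  obtain B where B: "B \<subseteq> R" "independent B" "R \<subseteq> span B"
    using maximal_independent_subset by blast
  obtain E where E: "B \<subseteq> E" "E \<subseteq> K \<union> B" "independent E" "K \<union> B \<subseteq> span E"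
    using maximal_independent_subset_extend[of B "K \<union> B"] B(2) by blast
  define q where "q = endo.construct E (\<lambda>w. if w \<in> B then 0 else w)"
  define r where "r = endo.construct E (\<lambda>w. if w \<in> B then w else 0)"
  have lq: "Vector_Spaces.linear scale scale q" and lr: "Vector_Spaces.linear scale scale r"
    unfolding q_def r_def by (intro endo.linear_construct[OF E(3)])+
  show ?thesis
  proof
    show "q x \<in> K" for x
    proof -
      have "q x \<in> span ((\<lambda>w. if w \<in> B then 0 else w) ` E)"
        unfolding q_def by (rule endo.construct_in_span[OF E(3)])
      also have "\<dots> \<subseteq> K"
        using E(2) by (intro span_minimal[OF _ K]) (auto simp: subspace_0[OF K])
      finally show ?thesis .
    qed
    show "r x \<in> R" for x
    proof -
      have "r x \<in> span ((\<lambda>w. if w \<in> B then w else 0) ` E)"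
        unfolding r_def by (rule endo.construct_in_span[OF E(3)])
      also have "\<dots> \<subseteq> span B"
        by (intro span_minimal) (auto simp: span_zero span_base)
      also have "\<dots> \<subseteq> R" using span_minimal[OF B(1) R] .
      finally show ?thesis .
    qed
    show "q b = 0" if "b \<in> R" for b
    proof (rule endo.linear_eq_on[OF lq endo.linear_zero])
      show "b \<in> span B" using that B(3) by blast
      show "q c = 0" if "c \<in> B" for c
        using that E(1) by (auto simp: q_def endo.construct_basis[OF E(3)])
    qed
    show "q (a + b) + r (a + b) = a + b" if "a \<in> K" "b \<in> R" for a b
    proof -
      have "a \<in> span E" using that(1) E(4) by blast
      moreover have "b \<in> span E" using that(2) B(3) span_mono[OF E(1)] by blast
      ultimately have "a + b \<in> span E" by (rule span_add)
      then show ?thesis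
        using endo.linear_eq_on[OF endo.linear_compose_add[OF lq lr] linear_id]
        by (simp add: q_def r_def endo.construct_basis[OF E(3)])
    qed
  qed (fact lq lr)+
qed

text \<open>With s a linear right inverse of d, z = id - s d maps
  into the cycles, which by semi-classicality lie in (Ker d \<inter> Ker Delta) + Im d.
  Projecting with the maps q and r above gives P = q z and the homotopy h = s r z.\<close>

lemma semi_classical_retraction:
  assumes ld: "Vector_Spaces.linear scale scale d" and lD: "Vector_Spaces.linear scale scale \<Delta>"
    and d_sq: "\<And>x. d (d x) = 0" and sc: "semi_classical d \<Delta>"
  obtains P h where "Vector_Spaces.linear scale scale P" "Vector_Spaces.linear scale scale h"
    "\<And>x. d (P x) = 0" "\<And>x. \<Delta> (P x) = 0" "\<And>x. P (d x) = 0"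
    "\<And>x. x - P x = d (h x) + h (d x)"
proof -
  define K where "K = {x. d x = 0 \<and> \<Delta> x = 0}"
  have sK: "subspace K" unfolding K_def
    by (rule subspaceI)
      (auto simp: endo.linear_0[OF ld] endo.linear_0[OF lD] endo.linear_add[OF ld] endo.linear_add[OF lD]
        endo.linear_scale[OF ld] endo.linear_scale[OF lD])
  have sR: "subspace (range d)"
    using endo.linear_subspace_image[OF ld subspace_UNIV] by simp
  obtain q r where lq: "Vector_Spaces.linear scale scale q"
    and lr: "Vector_Spaces.linear scale scale r" and qK: "\<And>x. q x \<in> K" and rR: "\<And>x. r x \<in> range d"
    and q_d: "\<And>b. b \<in> range d \<Longrightarrow> q b = 0"
    and qr: "\<And>a b. a \<in> K \<Longrightarrow> b \<in> range d \<Longrightarrow> q (a + b) + r (a + b) = a + b"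
    by (rule complement_projections[OF sK sR]) (rule that)
  obtain s where ls: "Vector_Spaces.linear scale scale s" and ds: "\<And>y. y \<in> range d \<Longrightarrow> d (s y) = y"
    using endo.linear_exists_right_inverse_on[OF ld subspace_UNIV] by blast
  define z where "z x = x - s (d x)" for x
  have lz: "Vector_Spaces.linear scale scale z"
    unfolding z_def[abs_def]
    by (rule endo.linear_compose_sub[OF linear_id[unfolded id_def] linear_compose_fun[OF ls ld]])
  have z_cycle: "d (z x) = 0" for x
    by (simp add: z_def endo.linear_diff[OF ld] ds)
  have qr_cycle: "q c + r c = c" if dc: "d c = 0" for c
  proof -
    obtain w where w: "w \<in> K" "c - w \<in> range d"
      using sc dc unfolding semi_classical_def K_def by blast
    show ?thesis using qr[OF w] by simp
  qed
  have r_d: "r (d x) = d x" for x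
    using qr_cycle[of "d x"] q_d[of "d x"] d_sq[of x] by simp
  have z_d: "z (d x) = d x" for x
    using d_sq[of x] by (simp add: z_def endo.linear_0[OF ls])
  show ?thesis
  proof
    show "Vector_Spaces.linear scale scale (\<lambda>x. q (z x))" by (rule linear_compose_fun[OF lq lz])
    show "Vector_Spaces.linear scale scale (\<lambda>x. s (r (z x)))"
      by (rule linear_compose_fun[OF ls linear_compose_fun[OF lr lz]])
    show "d (q (z x)) = 0" "\<Delta> (q (z x)) = 0" for x using qK[of "z x"] by (simp_all add: K_def)
    show "q (z (d x)) = 0" for x by (simp add: z_d q_d)
    show "x - q (z x) = d (s (r (z x))) + s (r (z (d x)))" for x
    proof -
      have "q (z x) = z x - r (z x)"
        using qr_cycle[OF z_cycle[of x]] by (simp add: eq_diff_eq)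
      then have "x - q (z x) = r (z x) + (x - z x)" by (simp add: algebra_simps)
      also have "r (z x) = d (s (r (z x)))" using ds[OF rR] by simp
      also have "x - z x = s (r (z (d x)))" by (simp only: z_d r_d) (simp add: z_def)
      finally show ?thesis .
    qed
  qed
qed

end

locale graded_vector_space = vector_space scale
  for scale :: "'k::field \<Rightarrow> 'v::ab_group_add \<Rightarrow> 'v" +
  fixes G :: "int \<Rightarrow> 'v set"
  assumes graded: "graded scale G"
begin

lemma subspace_G: "subspace (G n)"
  using graded unfolding graded_def by blast

definition decomposition :: "(int \<Rightarrow> 'v) \<Rightarrow> 'v \<Rightarrow> bool" where
  "decomposition c x \<longleftrightarrow>
     finite {n. c n \<noteq> 0} \<and> (\<forall>n. c n \<in> G n) \<and> x = (\<Sum>n\<in>{n. c n \<noteq> 0}. c n)"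

definition component :: "'v \<Rightarrow> int \<Rightarrow> 'v" where
  "component x = (THE c. decomposition c x)"

definition support :: "'v \<Rightarrow> int set" where
  "support x = {n. component x n \<noteq> 0}"

lemma unique_decomposition: "\<exists>!c. decomposition c x"
  using graded unfolding graded_def decomposition_def by blast

lemma decomposition_component: "decomposition (component x) x"
  unfolding component_def by (rule theI'[OF unique_decomposition])

lemma component_in_G: "component x n \<in> G n"
  using decomposition_component[of x] by (simp add: decomposition_def)

lemma finite_support: "finite (support x)"
  using decomposition_component[of x] by (simp add: decomposition_def support_def)

lemma sum_components: "finite T \<Longrightarrow> support x \<subseteq> T \<Longrightarrow> (\<Sum>n\<in>T. component x n) = x"
  using decomposition_component[of x]
  by (subst sum.mono_neutral_right) (auto simp: decomposition_def support_def)

lemma component_unique: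
  assumes "finite S" "\<And>n. c n \<in> G n" "\<And>n. n \<notin> S \<Longrightarrow> c n = 0" "x = sum c S"
  shows "component x = c"
proof -
  have sub: "{n. c n \<noteq> 0} \<subseteq> S" using assms(3) by blast
  have "sum c S = sum c {n. c n \<noteq> 0}"
    by (rule sum.mono_neutral_right[OF assms(1) sub]) auto
  then have "decomposition c x"
    using finite_subset[OF sub assms(1)] assms(2,4) by (simp add: decomposition_def)
  then show ?thesis unfolding component_def by (rule the1_equality[OF unique_decomposition])
qed

lemma component_add: "component (x + y) = (\<lambda>n. component x n + component y n)"
proof (rule component_unique[of "support x \<union> support y"])
  show "finite (support x \<union> support y)" using finite_support by simp
  show "component x n + component y n \<in> G n" for n
    using subspace_add[OF subspace_G] component_in_G by blast
  show "n \<notin> support x \<union> support y \<Longrightarrow> component x n + component y n = 0" for n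
    by (simp add: support_def)
  show "x + y = (\<Sum>n\<in>support x \<union> support y. component x n + component y n)"
    by (simp add: sum.distrib sum_components finite_support)
qed

lemma component_scale: "component (scale a x) = (\<lambda>n. scale a (component x n))"
proof (rule component_unique[of "support x"])
  show "finite (support x)" by (rule finite_support)
  show "scale a (component x n) \<in> G n" for n
    using subspace_scale[OF subspace_G] component_in_G by blast
  show "n \<notin> support x \<Longrightarrow> scale a (component x n) = 0" for n by (simp add: support_def)
  show "scale a x = (\<Sum>n\<in>support x. scale a (component x n))"
    by (simp add: scale_sum_right[symmetric] sum_components finite_support)
qed

lemma component_0: "component 0 = (\<lambda>n. 0)"
  by (rule component_unique[of "{}"]) (auto simp: subspace_0[OF subspace_G])

lemma component_diff: "component (x - y) n = component x n - component y n"
  using component_add[of "x - y" y] by (metis add_diff_cancel diff_add_cancel)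

lemma component_homogeneous: "x \<in> G m \<Longrightarrow> component x = (\<lambda>n. if n = m then x else 0)"
  by (rule component_unique[of "{m}"]) (auto simp: subspace_0[OF subspace_G])

lemma component_hom_map:
  assumes f: "hom_map scale G k f"
  shows "component (f x) = (\<lambda>n. f (component x (n - k)))"
proof -
  have lf: "Vector_Spaces.linear scale scale f" and fG: "\<And>n. f ` G n \<subseteq> G (n + k)"
    using f by (auto simp: hom_map_def)
  show ?thesis
  proof (rule component_unique[of "(\<lambda>n. n + k) ` support x"])
    show "finite ((\<lambda>n. n + k) ` support x)" using finite_support by simp
    show "f (component x (n - k)) \<in> G n" for n
      using fG[of "n - k"] component_in_G[of x "n - k"] by auto
    show "f (component x (n - k)) = 0" if "n \<notin> (\<lambda>n. n + k) ` support x" for n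
    proof -
      have "n - k \<notin> support x" using that by (metis diff_add_cancel image_eqI)
      then show ?thesis by (simp add: support_def endo.linear_0[OF lf])
    qed
    have "(\<Sum>n\<in>(\<lambda>n. n + k) ` support x. f (component x (n - k))) = (\<Sum>n\<in>support x. f (component x n))"
      by (subst sum.reindex) (auto simp: inj_on_def)
    also have "\<dots> = f x"
      by (simp add: endo.linear_sum[OF lf, symmetric] sum_components finite_support)
    finally show "f x = (\<Sum>n\<in>(\<lambda>n. n + k) ` support x. f (component x (n - k)))" by simp
  qed
qed

definition degree_part :: "int \<Rightarrow> ('v \<Rightarrow> 'v) \<Rightarrow> 'v \<Rightarrow> 'v" where
  "degree_part k f x = (\<Sum>n\<in>support x. component (f (component x n)) (n + k))"

lemma degree_part_over:
  assumes lf: "Vector_Spaces.linear scale scale f" and T: "finite T" "support x \<subseteq> T"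
  shows "degree_part k f x = (\<Sum>n\<in>T. component (f (component x n)) (n + k))"
  unfolding degree_part_def
  by (rule sum.mono_neutral_left[OF T]) (auto simp: support_def endo.linear_0[OF lf] component_0)

lemma linear_degree_part:
  assumes lf: "Vector_Spaces.linear scale scale f"
  shows "Vector_Spaces.linear scale scale (degree_part k f)"
  unfolding Vector_Spaces.linear_iff
proof (intro conjI allI vector_space_axioms)
  fix x y
  let ?T = "support x \<union> support y"
  have T: "finite ?T" using finite_support by simp
  have "support (x + y) \<subseteq> ?T" by (auto simp: support_def component_add)
  then show "degree_part k f (x + y) = degree_part k f x + degree_part k f y"
    using degree_part_over[OF lf T] degree_part_over[OF lf T, of x] degree_part_over[OF lf T, of y]
    by (simp add: component_add endo.linear_add[OF lf] sum.distrib)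
next
  fix a x
  have "support (scale a x) \<subseteq> support x" by (auto simp: support_def component_scale)
  then have "degree_part k f (scale a x)
      = (\<Sum>n\<in>support x. component (f (component (scale a x) n)) (n + k))"
    by (rule degree_part_over[OF lf finite_support])
  also have "\<dots> = scale a (degree_part k f x)"
    by (simp add: component_scale endo.linear_scale[OF lf] degree_part_def scale_sum_right)
  finally show "degree_part k f (scale a x) = scale a (degree_part k f x)" .
qed

lemma hom_map_degree_part:
  assumes lf: "Vector_Spaces.linear scale scale f"
  shows "hom_map scale G k (degree_part k f)"
  unfolding hom_map_def
proof (intro conjI allI linear_degree_part[OF lf] image_subsetI)
  fix m x assume x: "x \<in> G m"
  have "support x \<subseteq> {m}" using x by (auto simp: support_def component_homogeneous)
  then have "degree_part k f x = (\<Sum>n\<in>{m}. component (f (component x n)) (n + k))"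
    by (rule degree_part_over[OF lf, rotated]) simp
  then show "degree_part k f x \<in> G (m + k)" by (simp add: component_in_G)
qed

lemma degree_part_id: "degree_part 0 (\<lambda>x. x) x = x"
  unfolding degree_part_def
  by (simp add: component_homogeneous[OF component_in_G] sum_components finite_support)

lemma degree_part_plus: "degree_part k (\<lambda>y. f y + g y) x = degree_part k f x + degree_part k g x"
  unfolding degree_part_def by (simp only: component_add sum.distrib)

lemma degree_part_minus: "degree_part k (\<lambda>y. f y - g y) x = degree_part k f x - degree_part k g x"
  unfolding degree_part_def by (simp only: component_diff sum_subtractf)

lemma degree_part_zero: "degree_part k (\<lambda>y. 0) x = 0"
  unfolding degree_part_def by (simp only: component_0 sum.neutral_const)

text \<open>Composing with a homogeneous map on either side commutes with taking homogeneous parts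
  (up to shifting the degree); this is why identities such as d P = 0 survive.\<close>

lemma degree_part_compose_right:
  assumes lf: "Vector_Spaces.linear scale scale f" and g: "hom_map scale G j g"
  shows "degree_part k f (g x) = degree_part (k + j) (\<lambda>y. f (g y)) x"
proof -
  have lg: "Vector_Spaces.linear scale scale g" using g by (simp add: hom_map_def)
  let ?T = "(\<lambda>n. n + j) ` support x"
  have sub: "support (g x) \<subseteq> ?T"
  proof
    fix n assume "n \<in> support (g x)"
    then have "n - j \<in> support x"
      by (auto simp: support_def component_hom_map[OF g] endo.linear_0[OF lg])
    then show "n \<in> ?T" by (metis diff_add_cancel image_eqI)
  qed
  have inj: "inj_on (\<lambda>n. n + j) (support x)" by (simp add: inj_on_def)
  have shift: "component (g x) (n + j) = g (component x n)" for n
    by (simp add: component_hom_map[OF g])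
  have "degree_part k f (g x) = (\<Sum>n\<in>?T. component (f (component (g x) n)) (n + k))"
    using finite_support by (intro degree_part_over[OF lf _ sub]) simp
  also have "\<dots> = (\<Sum>n\<in>support x. component (f (g (component x n))) (n + (k + j)))"
    by (simp add: sum.reindex[OF inj] shift add.assoc add.commute[of j])
  finally show ?thesis by (simp add: degree_part_def)
qed

lemma degree_part_compose_left:
  assumes g: "hom_map scale G j g"
  shows "g (degree_part k f x) = degree_part (k + j) (\<lambda>y. g (f y)) x"
proof -
  have lg: "Vector_Spaces.linear scale scale g" using g by (simp add: hom_map_def)
  have "g (component z (n + k)) = component (g z) (n + (k + j))" for z n
    by (simp add: component_hom_map[OF g] add.assoc)
  then show ?thesis
    by (simp add: degree_part_def endo.linear_sum[OF lg])
qed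

lemma graded_semi_classical_retraction:
  assumes hd: "hom_map scale G (-1) d" and hD: "hom_map scale G 1 \<Delta>"
    and d_sq: "\<And>x. d (d x) = 0" and sc: "semi_classical d \<Delta>"
  obtains P h where "hom_map scale G 0 P" "hom_map scale G 1 h"
    "\<And>x. d (P x) = 0" "\<And>x. \<Delta> (P x) = 0" "\<And>x. P (d x) = 0"
    "\<And>x. x - P x = d (h x) + h (d x)"
proof -
  have ld: "Vector_Spaces.linear scale scale d" using hd by (simp add: hom_map_def)
  have lD: "Vector_Spaces.linear scale scale \<Delta>" using hD by (simp add: hom_map_def)
  obtain P0 h0 where lP0: "Vector_Spaces.linear scale scale P0"
    and lh0: "Vector_Spaces.linear scale scale h0"
    and d_P0: "\<And>x. d (P0 x) = 0" and Delta_P0: "\<And>x. \<Delta> (P0 x) = 0" and P0_d: "\<And>x. P0 (d x) = 0"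
    and homotopy0: "\<And>x. x - P0 x = d (h0 x) + h0 (d x)"
    by (rule semi_classical_retraction[OF ld lD d_sq sc]) (rule that)
  define P where "P = degree_part 0 P0"
  define h where "h = degree_part 1 h0"
  show ?thesis
  proof
    show "hom_map scale G 0 P" "hom_map scale G 1 h"
      unfolding P_def h_def by (intro hom_map_degree_part lP0 lh0)+
    show "d (P x) = 0" for x
      using degree_part_compose_left[OF hd, of 0 P0 x] by (simp add: P_def d_P0 degree_part_zero)
    show "\<Delta> (P x) = 0" for x
      using degree_part_compose_left[OF hD, of 0 P0 x] by (simp add: P_def Delta_P0 degree_part_zero)
    show "P (d x) = 0" for x
      using degree_part_compose_right[OF lP0 hd, of 0 x] by (simp add: P_def P0_d degree_part_zero)
    show "x - P x = d (h x) + h (d x)" for x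
    proof -
      have "d (h x) + h (d x) = degree_part 0 (\<lambda>y. d (h0 y)) x + degree_part 0 (\<lambda>y. h0 (d y)) x"
        using degree_part_compose_left[OF hd, of 1 h0 x] degree_part_compose_right[OF lh0 hd, of 1 x]
        by (simp add: h_def)
      also have "\<dots> = degree_part 0 (\<lambda>y. y - P0 y) x"
        by (simp add: degree_part_plus[symmetric] homotopy0)
      also have "\<dots> = x - P x"
        by (simp add: degree_part_minus degree_part_id P_def)
      finally show ?thesis by simp
    qed
  qed
qed

end

definition homology_section :: "('v::ab_group_add \<Rightarrow> 'v) \<Rightarrow> ('v \<Rightarrow> 'v) \<Rightarrow> 'v set \<Rightarrow> 'v" where
  "homology_section d P X = P (SOME z. d z = 0 \<and> X = hcls d z)"

lemma homotopy_square:
  fixes d P h :: "'a::ab_group_add \<Rightarrow> 'a"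
  assumes d_add: "\<And>x y. d (x + y) = d x + d y"
    and d_P: "\<And>x. d (P x) = 0" and P_d: "\<And>x. P (d x) = 0"
    and homotopy: "\<And>x. x - P x = d (h x) + h (d x)"
  shows "x - P (P x) = d (h x + h (P x)) + (h (d x) + h (P (d x)))"
proof -
  have "x - P (P x) = (x - P x) + (P x - P (P x))" by simp
  also have "\<dots> = (d (h x) + h (d x)) + (d (h (P x)) + h (d (P x)))" by (simp only: homotopy)
  also have "\<dots> = d (h x + h (P x)) + (h (d x) + h (P (d x)))"
    by (simp add: d_add d_P P_d algebra_simps)
  finally show ?thesis .
qed

lemma hcls_altdef: "hcls (d :: 'a::ab_group_add \<Rightarrow> 'a) a = {x. x - a \<in> range d}"
proof -
  have "x = a + y \<longleftrightarrow> x - a = y" for x y :: 'a by (auto simp: algebra_simps)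
  then show ?thesis unfolding hcls_def by blast
qed

context vector_space
begin


lemma hcls_eq_iff:
  assumes ld: "Vector_Spaces.linear scale scale d"
  shows "hcls d a = hcls d b \<longleftrightarrow> a - b \<in> range d"
proof
  assume "hcls d a = hcls d b"
  moreover have "a \<in> hcls d a"
    using endo.linear_0[OF ld] by (simp add: hcls_altdef)
  ultimately show "a - b \<in> range d" by (simp add: hcls_altdef)
next
  assume ab: "a - b \<in> range d"
  have R: "subspace (range d)" using endo.linear_subspace_image[OF ld subspace_UNIV] by simp
  have "x - a \<in> range d \<longleftrightarrow> x - b \<in> range d" for x
    using subspace_add[OF R _ ab, of "x - a"] subspace_diff[OF R _ ab, of "x - b"] by auto
  then show "hcls d a = hcls d b" by (simp add: hcls_altdef)
qed

lemma hadd_hcls: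
  assumes ld: "Vector_Spaces.linear scale scale d"
  shows "hadd (hcls d a) (hcls d b) = hcls d (a + b)"
proof (rule set_eqI, rule iffI)
  fix x assume "x \<in> hadd (hcls d a) (hcls d b)"
  then obtain e f where "x = (a + d e) + (b + d f)" unfolding hadd_def hcls_def by auto
  then have "x = (a + b) + d (e + f)" by (simp add: endo.linear_add[OF ld] algebra_simps)
  then show "x \<in> hcls d (a + b)" unfolding hcls_def by blast
next
  fix x assume "x \<in> hcls d (a + b)"
  then obtain e where "x = (a + b) + d e" unfolding hcls_def by auto
  then have "x = (a + d e) + (b + d 0)" by (simp add: endo.linear_0[OF ld] algebra_simps)
  then show "x \<in> hadd (hcls d a) (hcls d b)" unfolding hadd_def hcls_def by blast
qed

lemma hscale_hcls:
  assumes ld: "Vector_Spaces.linear scale scale d"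
  shows "hscale scale d c (hcls d a) = hcls d (scale c a)"
proof (rule set_eqI, rule iffI)
  fix x assume "x \<in> hscale scale d c (hcls d a)"
  then obtain e f where "x = scale c (a + d e) + d f" unfolding hscale_def hcls_def by auto
  then have "x = scale c a + d (scale c e + f)"
    by (simp add: scale_right_distrib endo.linear_add[OF ld] endo.linear_scale[OF ld] add.assoc)
  then show "x \<in> hcls d (scale c a)" unfolding hcls_def by blast
next
  fix x assume "x \<in> hcls d (scale c a)"
  then obtain e where "x = scale c (a + d 0) + d e" unfolding hcls_def
    by (auto simp: endo.linear_0[OF ld])
  then show "x \<in> hscale scale d c (hcls d a)" unfolding hscale_def hcls_def by blast
qed

lemma homology_section_hcls:
  assumes ld: "Vector_Spaces.linear scale scale d" and lP: "Vector_Spaces.linear scale scale P"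
    and P_d: "\<And>x. P (d x) = 0" and z: "d z = 0"
  shows "homology_section d P (hcls d z) = P z"
proof -
  let ?z = "SOME z'. d z' = 0 \<and> hcls d z = hcls d z'"
  have "d ?z = 0 \<and> hcls d z = hcls d ?z" by (rule someI[of _ z]) (simp add: z)
  then obtain c where "z - ?z = d c" by (auto simp: hcls_eq_iff[OF ld])
  then have "P z - P ?z = 0" by (metis P_d endo.linear_diff[OF lP])
  then show ?thesis by (simp add: homology_section_def)
qed

end


context graded_vector_space
begin

text \<open>Since Delta (i X) = 0,
  every term of the degeneration condition vanishes.\<close>

lemma nc_HdR_data_of_retraction:
  assumes hd: "hom_map scale G (-1) d" and hD: "hom_map scale G 1 \<Delta>"
    and hP: "hom_map scale G 0 P" and hh: "hom_map scale G 1 h"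
    and d_P: "\<And>x. d (P x) = 0" and Delta_P: "\<And>x. \<Delta> (P x) = 0" and P_d: "\<And>x. P (d x) = 0"
    and homotopy: "\<And>x. x - P x = d (h x) + h (d x)"
  shows "nc_HdR_data scale G d \<Delta> (\<lambda>x. hcls d (P x)) (homology_section d P) (\<lambda>x. h x + h (P x))"
proof -
  have ld: "Vector_Spaces.linear scale scale d" and lD: "Vector_Spaces.linear scale scale \<Delta>"
    and lP: "Vector_Spaces.linear scale scale P" and lh: "Vector_Spaces.linear scale scale h"
    using hd hD hP hh by (simp_all add: hom_map_def)
  have P_G: "P x \<in> G n" if "x \<in> G n" for x n using hP that by (force simp: hom_map_def)
  define p where "p x = hcls d (P x)" for x
  define i where "i = homology_section d P"
  define h' where "h' x = h x + h (P x)" for x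
  have i_hcls: "i (hcls d z) = P z" if "d z = 0" for z
    unfolding i_def by (rule homology_section_hcls[OF ld lP P_d that])
  have homology_cases: "\<exists>z. d z = 0 \<and> X = hcls d z" if "X \<in> homology d" for X
    using that unfolding homology_def by blast
  have square: "x - P (P x) = d (h' x) + h' (d x)" for x
    unfolding h'_def by (rule homotopy_square[OF endo.linear_add[OF ld] d_P P_d homotopy])
  have retract: "p (i X) = X" if X: "X \<in> homology d" for X
  proof -
    obtain z where z: "d z = 0" "X = hcls d z" using homology_cases[OF X] by blast
    have "z - P (P z) = d (h' z)"
      using square[of z] by (simp add: z h'_def P_d endo.linear_0[OF lh] endo.linear_0[OF lP])
    then have "P (P z) - z = d (- h' z)" by (metis endo.linear_neg[OF ld] minus_diff_eq)
    then show ?thesis using z by (simp add: p_def i_hcls d_P hcls_eq_iff[OF ld])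
  qed
  have hom_h': "hom_map scale G 1 h'"
    unfolding hom_map_def
  proof (intro conjI allI image_subsetI)
    show "Vector_Spaces.linear scale scale h'"
      unfolding h'_def[abs_def] by (rule endo.linear_compose_add[OF lh linear_compose_fun[OF lh lP]])
    show "h' x \<in> G (n + 1)" if x: "x \<in> G n" for n x
    proof -
      have "h ` G n \<subseteq> G (n + 1)" using hh by (simp add: hom_map_def)
      then have "h x \<in> G (n + 1)" "h (P x) \<in> G (n + 1)" using x P_G[OF x] by blast+
      then show ?thesis by (simp add: h'_def subspace_add[OF subspace_G])
    qed
  qed
  have degeneration: "p (((\<Delta> \<circ> h') ^^ k) (\<Delta> (i X))) = hcls d 0" if X: "X \<in> homology d" for k X
  proof -
    obtain z where z: "d z = 0" "X = hcls d z" using homology_cases[OF X] by blast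
    have "h' 0 = 0" using hom_h' by (simp add: hom_map_def endo.linear_0)
    then have "((\<Delta> \<circ> h') ^^ k) 0 = 0" for k
      by (induction k) (simp_all add: endo.linear_0[OF lD])
    then show ?thesis by (simp add: z i_hcls Delta_P p_def endo.linear_0[OF lP])
  qed
  show ?thesis
    unfolding nc_HdR_data_def p_def[symmetric] i_def[symmetric] h'_def[symmetric]
  proof (intro conjI allI ballI impI image_subsetI hom_h' retract degeneration)
    show "p x \<in> homology d" for x unfolding homology_def p_def using d_P by blast
    show "p x \<in> homology_deg G d n" if "x \<in> G n" for x n
      unfolding homology_deg_def p_def using P_G[OF that] d_P by blast
    show "p (x + y) = hadd (p x) (p y)" for x y
      by (simp add: p_def endo.linear_add[OF lP] hadd_hcls[OF ld])
    show "p (scale c x) = hscale scale d c (p x)" for c x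
      by (simp add: p_def endo.linear_scale[OF lP] hscale_hcls[OF ld])
    show "p (d x) = hcls d 0" for x by (simp add: p_def P_d)
    show "i (hadd X Y) = i X + i Y" if "X \<in> homology d" "Y \<in> homology d" for X Y
      using homology_cases[OF that(1)] homology_cases[OF that(2)]
      by (auto simp: hadd_hcls[OF ld] i_hcls endo.linear_add[OF ld] endo.linear_add[OF lP])
    show "i (hscale scale d c X) = scale c (i X)" if "X \<in> homology d" for c X
      using homology_cases[OF that]
      by (auto simp: hscale_hcls[OF ld] i_hcls endo.linear_scale[OF ld] endo.linear_scale[OF lP])
    show "i X \<in> G n" if "X \<in> homology_deg G d n" for X n
      using that by (auto simp: homology_deg_def i_hcls P_G)
    show "d (i X) = 0" if "X \<in> homology d" for X
      using homology_cases[OF that] by (auto simp: i_hcls d_P)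
    show "x - i (p x) = d (h' x) + h' (d x)" for x
      by (simp add: p_def i_hcls d_P square)
  qed
qed

end

theorem mainTheorem17:
  fixes scale :: "'k::field \<Rightarrow> 'v::ab_group_add \<Rightarrow> 'v"
    and G :: "int \<Rightarrow> 'v set"
    and d \<Delta> :: "'v \<Rightarrow> 'v"
  assumes "mixed_complex scale G d \<Delta>"
  shows "(dDelta_condition d \<Delta> \<longrightarrow> semi_classical d \<Delta>) \<and>
         (semi_classical d \<Delta> \<longrightarrow> (\<exists>p i h. nc_HdR_data scale G d \<Delta> p i h))"
proof -
  have vs: "vector_space scale" and gr: "graded scale G"
    and hd: "hom_map scale G (-1) d" and hD: "hom_map scale G 1 \<Delta>"
    and d_sq: "\<And>x. d (d x) = 0" and Delta_sq: "\<And>x. \<Delta> (\<Delta> x) = 0"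
    and anti: "\<And>x. d (\<Delta> x) + \<Delta> (d x) = 0"
    using assms unfolding mixed_complex_def by auto
  interpret graded_vector_space scale G
    using vs gr by (simp add: graded_vector_space_def graded_vector_space_axioms_def)
  have ld: "Vector_Spaces.linear scale scale d" and lD: "Vector_Spaces.linear scale scale \<Delta>"
    using hd hD by (simp_all add: hom_map_def)
  show ?thesis
  proof (intro conjI impI)
    show "semi_classical d \<Delta>" if "dDelta_condition d \<Delta>"
      by (rule dDelta_condition_imp_semi_classical[OF ld lD d_sq Delta_sq anti that])
  next
    assume sc: "semi_classical d \<Delta>"
    obtain P h where "hom_map scale G 0 P" "hom_map scale G 1 h"
      "\<And>x. d (P x) = 0" "\<And>x. \<Delta> (P x) = 0" "\<And>x. P (d x) = 0"
      "\<And>x. x - P x = d (h x) + h (d x)"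
      by (rule graded_semi_classical_retraction[OF hd hD d_sq sc]) (rule that)
    then show "\<exists>p i h. nc_HdR_data scale G d \<Delta> p i h"
      using nc_HdR_data_of_retraction[OF hd hD] by blast
  qed
qed

end
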